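(* Let $F$ be a finite field with $q=|F|$. Let $r,m,n\in\mathbb{N}$ satisfy $r\le m$ and $r\le n$. Then the number of $(m+n+1)$-tuples $x\in F^{m+n+1}$ satisfying $\operatorname{rank}(H_{m,n}(x))\le r$ is $q^{2r}$.
   Context: $\mathbb{N}=\{0,1,2,\ldots\}$. For $N\in\mathbb{N}$, $x=(x_0,\ldots,x_N)\in F^{N+1}$ and integers $p,p'\ge -1$ with $p+p'\le N$, the Hankel matrix $H_{p,p'}(x)$ is the $(p+1)\times(p'+1)$ matrix $(x_{i+j})_{0\le i\le p,\,0\le j\le p'}$. *)

theory Defs
  imports "Jordan_Normal_Form.DL_Rank"
begin

definition hankel :: "nat \<Rightarrow> nat \<Rightarrow> 'a list \<Rightarrow> 'a mat" where
  "hankel p p' x = mat (p+1) (p'+1) (\<lambda>(i,j). x ! (i+j))"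

definition mat_rank :: "'a::field mat \<Rightarrow> nat" where
  "mat_rank A = vec_space.rank (dim_row A) A"

end

theory Submission
  imports Defs "Jordan_Normal_Form.Matrix_Kernel" "HOL-Computational_Algebra.Formal_Power_Series"
    "HOL-Library.Cardinality"
begin

text \<open>
  Read backwards, a kernel vector of \<open>H\<^sub>m\<^sub>,\<^sub>n(x)\<close> is a polynomial \<open>P\<close> of degree at most \<open>n\<close>
  such that the coefficients of \<open>X\<^sup>n, \<dots>, X\<^bsup>n+m\<^esup>\<close> in \<open>x(X) P(X)\<close> vanish, where
  \<open>x(X) = \<Sum> x\<^sub>j X\<^sup>j\<close>; so the rank is at most \<open>r\<close> iff there are at least \<open>q\<^bsup>n+1-r\<^esup>\<close> such \<open>P\<close>.
  Sort the sequences by their number \<open>k\<close> of leading zeros, \<open>x = 0\<^sup>k a \<rho>\<close> with \<open>a \<noteq> 0\<close>, and let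
  \<open>T = a + \<rho>\<^sub>0 X + \<dots>\<close>, a unit. If \<open>k \<ge> r\<close>, the number of such \<open>P\<close> is computed or bounded
  directly, as multiplication by \<open>T\<close> is an automorphism of truncated power series, and the
  condition holds iff \<open>k \<ge> m + n + 1 - r\<close>. If \<open>k < r\<close>, trading \<open>P\<close> for \<open>G \<equiv> T P\<close> of degree
  below \<open>n - k\<close> turns the condition into the Hankel condition of size \<open>(m-k-1, n-k-1)\<close> and rank
  \<open>r-k-1\<close> for the coefficients of \<open>T\<^sup>-\<^sup>1\<close>, which \<open>\<rho>\<close> determines bijectively. Induction on \<open>r\<close>
  and a geometric sum give \<open>q\<^bsup>2r\<^esup>\<close>.
\<close>

section \<open>Counting over a finite field\<close>

lemma card_lists_length: "card {xs :: 'a::finite list. length xs = n} = CARD('a) ^ n"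
  using card_lists_length_eq[of "UNIV :: 'a set" n] by simp

lemma finite_lists_length: "finite {xs :: 'a::finite list. length xs = n}"
  using finite_lists_length_eq[of "UNIV :: 'a set" n] by simp

lemma card_carrier_vec: "card (carrier_vec n :: 'a::finite vec set) = CARD('a) ^ n"
proof -
  have "bij_betw list_of_vec (carrier_vec n) {xs :: 'a list. length xs = n}"
    by (rule bij_betwI[where g = vec_of_list]) (auto simp: vec_list list_vec intro!: carrier_vecI)
  then show ?thesis
    by (simp add: bij_betw_same_card card_lists_length)
qed

lemma card_field_ge_2: "2 \<le> CARD('a::{field,finite})"
proof -
  have "card {0 :: 'a, 1} \<le> CARD('a)" by (rule card_mono) auto
  then show ?thesis by simp
qed

lemma (in vectorspace) card_carrier:
  assumes fd: "fin_dim" and K: "carrier K = (UNIV :: 'a set)"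
  shows "card (carrier V) = CARD('a) ^ dim"
proof -
  obtain \<beta> where fin: "finite \<beta>" and b: "basis \<beta>" using finite_basis_exists[OF fd] by blast
  have \<beta>V: "\<beta> \<subseteq> carrier V" using b unfolding basis_def by blast
  have unique: "\<forall>v. v \<in> carrier V \<longrightarrow> (\<exists>!c. c \<in> \<beta> \<rightarrow>\<^sub>E carrier K \<and> lincomb c \<beta> = v)"
    using basis_criterion[OF fin \<beta>V] b by blast
  have "bij_betw (\<lambda>c. lincomb c \<beta>) (\<beta> \<rightarrow>\<^sub>E carrier K) (carrier V)"
  proof (rule bij_betwI')
    fix c c' assume c: "c \<in> \<beta> \<rightarrow>\<^sub>E carrier K" and c': "c' \<in> \<beta> \<rightarrow>\<^sub>E carrier K"
    have "lincomb c \<beta> \<in> carrier V" using c \<beta>V fin by (intro lincomb_closed) auto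
    then show "(lincomb c \<beta> = lincomb c' \<beta>) = (c = c')" using unique c c' by metis
  next
    fix c assume "c \<in> \<beta> \<rightarrow>\<^sub>E carrier K"
    then show "lincomb c \<beta> \<in> carrier V" using \<beta>V fin by (intro lincomb_closed) auto
  next
    fix v assume "v \<in> carrier V"
    then show "\<exists>c\<in>\<beta> \<rightarrow>\<^sub>E carrier K. v = lincomb c \<beta>" using unique by metis
  qed
  then have "card (carrier V) = card (\<beta> \<rightarrow>\<^sub>E carrier K)" by (simp add: bij_betw_same_card)
  also have "\<dots> = CARD('a) ^ card \<beta>" using fin by (simp add: card_PiE K)
  finally show ?thesis using dim_basis[OF fin b] by simp
qed

lemma (in vec_space) mult_mat_vec_image_eq_span_cols:
  assumes A: "A \<in> carrier_mat n nc"
  shows "(\<lambda>v. A *\<^sub>v v) ` carrier_vec nc = span (set (cols A))"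
proof -
  have cols: "set (cols A) \<subseteq> carrier_vec n" using A cols_dim by blast
  have "span (set (cols A)) = span_list (cols A)" using span_list_as_span[OF cols] by simp
  also have "\<dots> = {A *\<^sub>v vec nc c | c. True}"
  proof -
    have "\<forall>w\<in>set (cols A). dim_vec w = n" using cols by auto
    moreover have "mat_of_cols n (cols A) = A" "length (cols A) = nc" using A by auto
    ultimately have "lincomb_list c (cols A) = A *\<^sub>v vec nc c" for c
      using lincomb_list_as_mat_mult[of "cols A" c] by simp
    then show ?thesis unfolding span_list_def by auto
  qed
  also have "\<dots> = (\<lambda>v. A *\<^sub>v v) ` carrier_vec nc"
  proof (auto)
    fix v :: "'a vec" assume "v \<in> carrier_vec nc"
    then have "v = vec nc (\<lambda>i. v $ i)" by auto
    then show "\<exists>c. A *\<^sub>v v = A *\<^sub>v vec nc c" by (intro exI[of _ "\<lambda>i. v $ i"]) simp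
  qed
  finally show ?thesis by simp
qed

text \<open>Counting version of rank-nullity: the fibres of \<open>v \<mapsto> A v\<close> are translates of the kernel.\<close>
lemma card_carrier_vec_eq_image_times_kernel:
  fixes A :: "'a::{field,finite} mat"
  assumes A: "A \<in> carrier_mat nr nc"
  shows "card (carrier_vec nc :: 'a vec set) = card ((\<lambda>v. A *\<^sub>v v) ` carrier_vec nc) * card (mat_kernel A)"
proof -
  let ?W = "(\<lambda>v. A *\<^sub>v v) ` carrier_vec nc"
  define s where "s w = (SOME v. v \<in> carrier_vec nc \<and> A *\<^sub>v v = w)" for w
  have s: "s w \<in> carrier_vec nc" "A *\<^sub>v s w = w" if "w \<in> ?W" for w
    using that someI_ex[of "\<lambda>v. v \<in> carrier_vec nc \<and> A *\<^sub>v v = w"] unfolding s_def by blast+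
  have "bij_betw (\<lambda>v. (A *\<^sub>v v, v - s (A *\<^sub>v v))) (carrier_vec nc) (?W \<times> mat_kernel A)"
  proof (rule bij_betwI[where g = "\<lambda>(w, k). s w + k"])
    show "(\<lambda>v. (A *\<^sub>v v, v - s (A *\<^sub>v v))) \<in> carrier_vec nc \<rightarrow> ?W \<times> mat_kernel A"
    proof
      fix v :: "'a vec" assume v: "v \<in> carrier_vec nc"
      then have w: "A *\<^sub>v v \<in> ?W" by blast
      have "A *\<^sub>v (v - s (A *\<^sub>v v)) = A *\<^sub>v v - A *\<^sub>v s (A *\<^sub>v v)"
        using A v s[OF w] by (simp add: mult_minus_distrib_mat_vec)
      also have "\<dots> = 0\<^sub>v nr" using A v s[OF w] by simp
      finally have "v - s (A *\<^sub>v v) \<in> mat_kernel A"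
        using A v s[OF w] by (intro mat_kernelI) auto
      then show "(A *\<^sub>v v, v - s (A *\<^sub>v v)) \<in> ?W \<times> mat_kernel A" using w by simp
    qed
    show "(\<lambda>(w, k). s w + k) \<in> ?W \<times> mat_kernel A \<rightarrow> carrier_vec nc"
      using s A by (auto dest: mat_kernelD)
    show "(\<lambda>(w, k). s w + k) (A *\<^sub>v v, v - s (A *\<^sub>v v)) = v" if "v \<in> carrier_vec nc" for v
      using s[of "A *\<^sub>v v"] that by auto
  next
    fix p assume "p \<in> ?W \<times> mat_kernel A"
    then obtain w k where p: "p = (w, k)" and w: "w \<in> ?W" and k: "k \<in> mat_kernel A" by auto
    have k': "k \<in> carrier_vec nc" "A *\<^sub>v k = 0\<^sub>v nr" using mat_kernelD[OF A k] by auto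
    have "A *\<^sub>v (s w + k) = A *\<^sub>v s w + A *\<^sub>v k"
      using A k' s[OF w] by (simp add: mult_add_distrib_mat_vec)
    also have "\<dots> = w" using k' s[OF w] A by (metis mult_mat_vec_carrier right_zero_vec)
    finally show "(\<lambda>v. (A *\<^sub>v v, v - s (A *\<^sub>v v))) ((\<lambda>(w, k). s w + k) p) = p"
      using k' s[OF w] p by auto
  qed
  then show ?thesis by (simp add: bij_betw_same_card card_cartesian_product)
qed

lemma card_mat_kernel:
  fixes A :: "'a::{field,finite} mat"
  assumes A: "A \<in> carrier_mat nr nc"
  shows "card (mat_kernel A) = CARD('a) ^ (nc - mat_rank A)"
proof -
  interpret vec_space "TYPE('a)" nr .
  let ?S = "set (cols A)"
  have cols: "?S \<subseteq> carrier_vec nr" using A cols_dim by blast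
  have "vectorspace class_ring (span_vs ?S)"
    using span_is_subspace[OF cols] subspace_is_vs by simp
  then have "card (span ?S) = CARD('a) ^ mat_rank A"
    using vectorspace.card_carrier fin_dim_span_cols[OF A] A
    by (fastforce simp: mat_rank_def rank_def class_ring_simps)
  then have "CARD('a) ^ nc = card (mat_kernel A) * CARD('a) ^ mat_rank A"
    using card_carrier_vec_eq_image_times_kernel[OF A] mult_mat_vec_image_eq_span_cols[OF A]
    by (simp add: card_carrier_vec)
  moreover have "mat_rank A \<le> nc"
    using rank_le_nc[OF A] A by (simp add: mat_rank_def)
  then have "CARD('a) ^ nc = CARD('a) ^ (nc - mat_rank A) * CARD('a) ^ mat_rank A"
    by (simp add: power_add[symmetric])
  ultimately show ?thesis
    using card_field_ge_2[where 'a = 'a] by simp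
qed

section \<open>Truncated power series\<close>

definition fps_supported_on :: "nat set \<Rightarrow> 'a::zero fps set" where
  "fps_supported_on S = {P. \<forall>d. d \<notin> S \<longrightarrow> fps_nth P d = 0}"

lemma fps_supported_on_iff [simp]:
  "P \<in> fps_supported_on S \<longleftrightarrow> (\<forall>d. d \<notin> S \<longrightarrow> fps_nth P d = 0)"
  by (simp add: fps_supported_on_def)

lemma bij_betw_fps_supported_on_PiE:
  "bij_betw (\<lambda>P. restrict (fps_nth P) S) (fps_supported_on S) (S \<rightarrow>\<^sub>E (UNIV :: 'a::zero set))"
proof (rule bij_betwI[where g = "\<lambda>c. Abs_fps (\<lambda>d. if d \<in> S then c d else 0)"])
  fix P :: "'a fps" assume "P \<in> fps_supported_on S"
  then show "Abs_fps (\<lambda>d. if d \<in> S then restrict (fps_nth P) S d else 0) = P"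
    by (intro fps_ext) auto
next
  fix c :: "nat \<Rightarrow> 'a" assume "c \<in> S \<rightarrow>\<^sub>E UNIV"
  then show "restrict (fps_nth (Abs_fps (\<lambda>d. if d \<in> S then c d else 0))) S = c"
    by (auto simp: restrict_def PiE_def extensional_def)
qed auto

lemma finite_fps_supported_on:
  assumes "finite S"
  shows "finite (fps_supported_on S :: 'a::{zero,finite} fps set)"
proof -
  have "finite (S \<rightarrow>\<^sub>E (UNIV :: 'a set))" using assms by (simp add: finite_PiE)
  then show ?thesis using bij_betw_finite[OF bij_betw_fps_supported_on_PiE[of S, where 'a = 'a]] by blast
qed

lemma card_fps_supported_on:
  "finite S \<Longrightarrow> card (fps_supported_on S :: 'a::{zero,finite} fps set) = CARD('a) ^ card S"
  using bij_betw_same_card[OF bij_betw_fps_supported_on_PiE[of S]] by (simp add: card_PiE)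

lemma fps_mult_supported_on:
  fixes F G :: "'a::comm_ring_1 fps"
  assumes F: "F \<in> fps_supported_on {..a}" and G: "G \<in> fps_supported_on {..b}"
  shows "F * G \<in> fps_supported_on {..a + b}"
proof -
  have "fps_nth F i * fps_nth G (d - i) = 0" if "a + b < d" for d i
    using F G that by (cases "a < i") auto
  then show ?thesis by (auto simp: fps_mult_nth intro!: sum.neutral)
qed

lemma fps_cutoff_mult_cong:
  assumes "fps_cutoff N F = fps_cutoff N G"
  shows "fps_cutoff N (H * F) = fps_cutoff N (H * G)"
proof -
  have cutoff: "fps_cutoff N (H * F') = fps_cutoff N (H * fps_cutoff N F')" for F'
    by (simp add: fps_cutoff_eq_fps_cutoff_iff fps_cutoff_right_mult_nth)
  have "fps_cutoff N (H * F) = fps_cutoff N (H * fps_cutoff N F)" by (rule cutoff)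
  also have "\<dots> = fps_cutoff N (H * fps_cutoff N G)" by (simp only: assms)
  also have "\<dots> = fps_cutoff N (H * G)" by (rule cutoff[symmetric])
  finally show ?thesis .
qed

lemma fps_cutoff_inverse_cong:
  fixes F G :: "'a::field fps"
  assumes eq: "fps_cutoff N F = fps_cutoff N G" and F0: "fps_nth F 0 \<noteq> 0"
  shows "fps_cutoff N (inverse F) = fps_cutoff N (inverse G)"
proof (cases "N = 0")
  case False
  then have "fps_nth G 0 \<noteq> 0" using eq F0 by (metis fps_cutoff_nth neq0_conv)
  then show ?thesis using fps_cutoff_inverse[OF F0, of N] fps_cutoff_inverse[of G N] eq by simp
qed simp

lemma bij_betw_unit_mult_cutoff:
  fixes T :: "'a::field fps"
  assumes T0: "fps_nth T 0 \<noteq> 0"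
  shows "bij_betw (\<lambda>P. fps_cutoff (Suc n) (T * P)) (fps_supported_on {..n}) (fps_supported_on {..n})"
proof (rule bij_betwI[where g = "\<lambda>Q. fps_cutoff (Suc n) (inverse T * Q)"])
  have inverse_cancel: "fps_cutoff (Suc n) (U * fps_cutoff (Suc n) (V * Q)) = Q"
    if "U * V = 1" and "Q \<in> fps_supported_on {..n}" for U V Q :: "'a fps"
  proof -
    have "fps_cutoff (Suc n) (U * fps_cutoff (Suc n) (V * Q)) = fps_cutoff (Suc n) (U * (V * Q))"
      by (rule fps_cutoff_mult_cong) (simp add: fps_cutoff_eq_fps_cutoff_iff)
    also have "U * (V * Q) = Q" using that(1) by (simp add: mult.assoc[symmetric])
    also have "fps_cutoff (Suc n) Q = Q" using that(2) by (auto simp: fps_eq_iff)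
    finally show ?thesis .
  qed
  show "fps_cutoff (Suc n) (inverse T * fps_cutoff (Suc n) (T * P)) = P"
    if "P \<in> fps_supported_on {..n}" for P
    using inverse_cancel[OF inverse_mult_eq_1[OF T0] that] .
  show "fps_cutoff (Suc n) (T * fps_cutoff (Suc n) (inverse T * Q)) = Q"
    if "Q \<in> fps_supported_on {..n}" for Q
    using inverse_cancel[OF inverse_mult_eq_1'[OF T0] that] .
qed auto

lemma card_unit_mult_vanishing_on:
  fixes T :: "'a::{field,finite} fps"
  assumes T0: "fps_nth T 0 \<noteq> 0" and J: "J \<subseteq> {..n}"
  shows "card {P \<in> fps_supported_on {..n}. \<forall>j\<in>J. fps_nth (T * P) j = 0} = CARD('a) ^ (Suc n - card J)"
proof -
  have "bij_betw (\<lambda>P. fps_cutoff (Suc n) (T * P))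
      {P \<in> fps_supported_on {..n}. \<forall>j\<in>J. fps_nth (T * P) j = 0}
      {Q \<in> fps_supported_on {..n}. \<forall>j\<in>J. fps_nth Q j = 0}"
    by (rule bij_betw_Collect[OF bij_betw_unit_mult_cutoff[OF T0]]) (use J in auto)
  then have "card {P \<in> fps_supported_on {..n}. \<forall>j\<in>J. fps_nth (T * P) j = 0}
      = card {Q \<in> fps_supported_on {..n}. \<forall>j\<in>J. fps_nth Q j = (0 :: 'a)}"
    by (rule bij_betw_same_card)
  also have "{Q \<in> fps_supported_on {..n}. \<forall>j\<in>J. fps_nth Q j = (0 :: 'a)} = fps_supported_on ({..n} - J)"
    by auto
  also have "card (fps_supported_on ({..n} - J) :: 'a fps set) = CARD('a) ^ card ({..n} - J)"
    by (simp add: card_fps_supported_on)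
  also have "card ({..n} - J) = Suc n - card J"
    using J by (simp add: card_Diff_subset finite_subset)
  finally show ?thesis .
qed

lemma fps_nth_left_inverse_mult_cutoff:
  fixes F H U V :: "'a::comm_ring_1 fps"
  assumes "fps_cutoff N F = fps_cutoff N (U * H)" and "V * U = 1" and "d < N"
  shows "fps_nth (V * F) d = fps_nth H d"
proof -
  have "fps_cutoff N (V * F) = fps_cutoff N (V * (U * H))"
    by (rule fps_cutoff_mult_cong) fact
  then show ?thesis
    using assms(2,3) by (simp add: fps_cutoff_eq_fps_cutoff_iff mult.assoc[symmetric])
qed

text \<open>Both sets parametrise the pairs \<open>(P, G)\<close> with \<open>T P \<equiv> G mod X\<^sup>M\<^sup>+\<^sup>1\<close>, \<open>deg P \<le> n\<close> and
  \<open>deg G < n - k\<close>: \<open>G\<close> is \<open>T P\<close> truncated below \<open>n - k\<close>, and \<open>P\<close> is \<open>T\<^sup>-\<^sup>1 G\<close> truncated above \<open>n\<close>.\<close>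
lemma bij_betw_numerators_denominators:
  fixes T :: "'a::field fps"
  assumes T0: "fps_nth T 0 \<noteq> 0" and kn: "k \<le> n" and nM: "n \<le> M"
  shows "bij_betw (\<lambda>G. fps_cutoff (Suc n) (inverse T * G))
     {G \<in> fps_supported_on {..<n - k}. \<forall>j\<in>{n<..M}. fps_nth (inverse T * G) j = 0}
     {P \<in> fps_supported_on {..n}. \<forall>e\<in>{n - k..M}. fps_nth (T * P) e = 0}"
    (is "bij_betw ?f ?Num ?Den")
proof -
  let ?g = "\<lambda>P. fps_cutoff (n - k) (T * P)"
  have f: "fps_nth (T * ?f G) d = fps_nth G d" if G: "G \<in> ?Num" and d: "d \<le> M" for G d
  proof (rule fps_nth_left_inverse_mult_cutoff[OF _ inverse_mult_eq_1'[OF T0]])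
    show "fps_cutoff (Suc M) (?f G) = fps_cutoff (Suc M) (inverse T * G)"
      using G by (auto simp: fps_cutoff_eq_fps_cutoff_iff)
    show "d < Suc M" using d by simp
  qed
  have g: "fps_nth (inverse T * ?g P) d = fps_nth P d" if P: "P \<in> ?Den" and d: "d \<le> M" for P d
  proof (rule fps_nth_left_inverse_mult_cutoff[OF _ inverse_mult_eq_1[OF T0]])
    show "fps_cutoff (Suc M) (?g P) = fps_cutoff (Suc M) (T * P)"
      using P by (auto simp: fps_cutoff_eq_fps_cutoff_iff)
    show "d < Suc M" using d by simp
  qed
  show ?thesis
  proof (rule bij_betwI[where g = ?g])
    show "?f \<in> ?Num \<rightarrow> ?Den"
    proof
      fix G assume G: "G \<in> ?Num"
      then have "fps_nth (T * ?f G) e = 0" if "n - k \<le> e" "e \<le> M" for e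
        using f[OF G, of e] that by simp
      then show "?f G \<in> ?Den" by auto
    qed
    show "?g \<in> ?Den \<rightarrow> ?Num"
    proof
      fix P assume P: "P \<in> ?Den"
      then have "fps_nth (inverse T * ?g P) j = 0" if "n < j" "j \<le> M" for j
        using g[OF P, of j] that by simp
      then show "?g P \<in> ?Num" by auto
    qed
    show "?g (?f G) = G" if G: "G \<in> ?Num" for G
    proof (rule fps_ext)
      fix d show "fps_nth (?g (?f G)) d = fps_nth G d"
        using f[OF G, of d] G kn nM by auto
    qed
    show "?f (?g P) = P" if P: "P \<in> ?Den" for P
    proof (rule fps_ext)
      fix d show "fps_nth (?f (?g P)) d = fps_nth P d"
        using g[OF P, of d] P nM by auto
    qed
  qed
qed

section \<open>Hankel systems as power series congruences\<close>

definition fps_of_list :: "'a::zero list \<Rightarrow> 'a fps" where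
  "fps_of_list x = Abs_fps (\<lambda>j. if j < length x then x ! j else 0)"

lemma fps_nth_fps_of_list: "fps_nth (fps_of_list x) j = (if j < length x then x ! j else 0)"
  by (simp add: fps_of_list_def)

lemma fps_of_list_replicate_zero_append:
  "fps_of_list (replicate k 0 @ y) = fps_X ^ k * fps_of_list (y :: 'a::comm_ring_1 list)"
  by (rule fps_ext) (auto simp: fps_nth_fps_of_list fps_X_power_mult_nth nth_append)

text \<open>A vector \<open>v\<close> in the kernel of \<open>hankel m n x\<close> is encoded as \<open>P = \<Sum>\<^sub>l v\<^sub>l X\<^bsup>n-l\<^esup>\<close>; then
  \<open>(H v)\<^sub>i\<close> is the coefficient of \<open>X\<^bsup>n+i\<^esup>\<close> in \<open>x(X) P(X)\<close>.\<close>
definition hankel_annihilators :: "nat \<Rightarrow> nat \<Rightarrow> 'a::comm_ring_1 list \<Rightarrow> 'a fps set" where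
  "hankel_annihilators m n x =
     {P \<in> fps_supported_on {..n}. \<forall>i\<le>m. fps_nth (fps_of_list x * P) (n + i) = 0}"

lemma card_hankel_annihilators_zero:
  "card (hankel_annihilators m n (replicate L (0 :: 'a::{field,finite}))) = CARD('a) ^ Suc n"
proof -
  have "fps_of_list (replicate L (0 :: 'a)) = 0" by (rule fps_ext) (simp add: fps_nth_fps_of_list)
  then have "hankel_annihilators m n (replicate L (0 :: 'a)) = fps_supported_on {..n}"
    by (auto simp: hankel_annihilators_def)
  then show ?thesis by (simp add: card_fps_supported_on)
qed

lemma hankel_annihilators_leading_zeros:
  fixes y :: "'a::comm_ring_1 list"
  assumes "k \<le> m + n"
  shows "hankel_annihilators m n (replicate k 0 @ y) =
    {P \<in> fps_supported_on {..n}. \<forall>e\<in>{n - k..m + n - k}. fps_nth (fps_of_list y * P) e = 0}"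
proof -
  have nth: "fps_nth (fps_of_list (replicate k 0 @ y) * P) j =
      (if j < k then 0 else fps_nth (fps_of_list y * P) (j - k))" for P j
    by (simp add: fps_of_list_replicate_zero_append mult.assoc fps_X_power_mult_nth)
  have "(\<forall>i\<le>m. fps_nth (fps_of_list (replicate k 0 @ y) * P) (n + i) = 0) \<longleftrightarrow>
      (\<forall>e\<in>{n - k..m + n - k}. fps_nth (fps_of_list y * P) e = 0)" for P
  proof
    assume H: "\<forall>i\<le>m. fps_nth (fps_of_list (replicate k 0 @ y) * P) (n + i) = 0"
    show "\<forall>e\<in>{n - k..m + n - k}. fps_nth (fps_of_list y * P) e = 0"
    proof
      fix e assume e: "e \<in> {n - k..m + n - k}"
      then have "e + k - n \<le> m" "n + (e + k - n) = e + k" using assms by auto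
      then show "fps_nth (fps_of_list y * P) e = 0" using H nth by force
    qed
  next
    assume H: "\<forall>e\<in>{n - k..m + n - k}. fps_nth (fps_of_list y * P) e = 0"
    show "\<forall>i\<le>m. fps_nth (fps_of_list (replicate k 0 @ y) * P) (n + i) = 0"
    proof (intro allI impI)
      fix i assume "i \<le> m"
      then have "k \<le> n + i \<Longrightarrow> n + i - k \<in> {n - k..m + n - k}" by auto
      then show "fps_nth (fps_of_list (replicate k 0 @ y) * P) (n + i) = 0"
        using H by (auto simp: nth)
    qed
  qed
  then show ?thesis by (auto simp: hankel_annihilators_def)
qed

lemma card_hankel_annihilators_eq_numerators:
  fixes a :: "'a::{field,finite}"
  assumes a: "a \<noteq> 0" and "k \<le> m" and "k \<le> n"
  shows "card (hankel_annihilators m n (replicate k 0 @ a # xs)) =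
    card {G \<in> fps_supported_on {..<n - k}.
      \<forall>j\<in>{n<..m + n - k}. fps_nth (inverse (fps_of_list (a # xs)) * G) j = 0}"
proof -
  have "bij_betw (\<lambda>G. fps_cutoff (Suc n) (inverse (fps_of_list (a # xs)) * G))
      {G \<in> fps_supported_on {..<n - k}.
        \<forall>j\<in>{n<..m + n - k}. fps_nth (inverse (fps_of_list (a # xs)) * G) j = 0}
      (hankel_annihilators m n (replicate k 0 @ a # xs))"
    unfolding hankel_annihilators_leading_zeros[of k m n, OF trans_le_add2[OF assms(3)]]
    by (rule bij_betw_numerators_denominators) (use assms in \<open>auto simp: fps_nth_fps_of_list\<close>)
  then show ?thesis by (simp add: bij_betw_same_card)
qed

lemma card_hankel_annihilators_few_zeros_le:
  fixes a :: "'a::{field,finite}"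
  assumes "a \<noteq> 0" and "k \<le> m" and "k \<le> n"
  shows "card (hankel_annihilators m n (replicate k 0 @ a # xs)) \<le> CARD('a) ^ (n - k)"
proof -
  have "card (hankel_annihilators m n (replicate k 0 @ a # xs)) \<le>
      card (fps_supported_on {..<n - k} :: 'a fps set)"
    unfolding card_hankel_annihilators_eq_numerators[OF assms]
    by (rule card_mono[OF finite_fps_supported_on]) auto
  then show ?thesis by (simp add: card_fps_supported_on)
qed

lemma card_hankel_annihilators_many_zeros:
  fixes a :: "'a::{field,finite}"
  assumes "a \<noteq> 0" and "m < k" and "k \<le> m + n"
  shows "card (hankel_annihilators m n (replicate k 0 @ a # xs)) = CARD('a) ^ (max n k - m)"
proof -
  have "card (hankel_annihilators m n (replicate k 0 @ a # xs)) =
      CARD('a) ^ (Suc n - card {n - k..m + n - k})"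
    unfolding hankel_annihilators_leading_zeros[OF assms(3)]
    by (rule card_unit_mult_vanishing_on) (use assms in \<open>auto simp: fps_nth_fps_of_list\<close>)
  also have "Suc n - card {n - k..m + n - k} = max n k - m"
    using assms by (auto simp: max_def)
  finally show ?thesis .
qed

lemma card_hankel_annihilators_le_1:
  fixes a :: "'a::{field,finite}"
  assumes "a \<noteq> 0" and "n < k" and "k \<le> m"
  shows "card (hankel_annihilators m n (replicate k 0 @ a # xs)) \<le> 1"
proof -
  let ?T = "fps_of_list (a # xs)"
  let ?S = "{P \<in> fps_supported_on {..n}. \<forall>j\<in>{..n}. fps_nth (?T * P) j = 0}"
  have "hankel_annihilators m n (replicate k 0 @ a # xs) \<subseteq> ?S"
    using assms by (auto simp: hankel_annihilators_leading_zeros)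
  moreover have "finite ?S"
    by (rule finite_subset[OF _ finite_fps_supported_on[of "{..n}"]]) auto
  ultimately have "card (hankel_annihilators m n (replicate k 0 @ a # xs)) \<le> card ?S"
    by (rule card_mono[rotated])
  also have "card ?S = CARD('a) ^ (Suc n - card {..n})"
    by (rule card_unit_mult_vanishing_on) (use assms in \<open>auto simp: fps_nth_fps_of_list\<close>)
  finally show ?thesis by simp
qed

text \<open>Coefficients of \<open>U\<close> below \<open>X\<^bsup>k+2\<^esup>\<close> cannot reach degree \<open>n + 1\<close> in \<open>U G\<close>.\<close>
lemma fps_nth_mult_eq_tail_coeffs:
  fixes U G :: "'a::comm_ring_1 fps"
  assumes km: "k < m" and kn: "k < n" and G: "G \<in> fps_supported_on {..<n - k}" and i: "i \<le> m - k - 1"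
  shows "fps_nth (U * G) (n + 1 + i) =
    fps_nth (fps_of_list (map (fps_nth U) [k + 2..<m + n - k + 1]) * G) (n - k - 1 + i)"
proof -
  let ?\<rho> = "map (fps_nth U) [k + 2..<m + n - k + 1]"
  let ?S = "fps_shift (k + 2) U" and ?C = "fps_cutoff (k + 2) U"
  have "U * G = fps_X ^ (k + 2) * (?S * G) + ?C * G"
    by (metis fps_shift_cutoff' distrib_right mult.assoc)
  moreover have "?C * G \<in> fps_supported_on {..k + 1 + (n - k - 1)}"
    using G by (intro fps_mult_supported_on) auto
  then have "fps_nth (?C * G) (n + 1 + i) = 0" using kn by auto
  moreover have "fps_nth (fps_X ^ (k + 2) * (?S * G)) (n + 1 + i) = fps_nth (?S * G) (n - k - 1 + i)"
    using kn fps_X_power_mult_nth[of "k + 2" "?S * G" "n + 1 + i"]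
    by (simp del: power_Suc add_2_eq_Suc' add: numeral_2_eq_2)
  moreover have "fps_cutoff (m + n - 2 * k - 1) ?S = fps_cutoff (m + n - 2 * k - 1) (fps_of_list ?\<rho>)"
    using km kn by (auto simp: fps_cutoff_eq_fps_cutoff_iff fps_nth_fps_of_list add.commute simp del: upt_Suc)
  then have "fps_cutoff (m + n - 2 * k - 1) (G * ?S) = fps_cutoff (m + n - 2 * k - 1) (G * fps_of_list ?\<rho>)"
    by (rule fps_cutoff_mult_cong)
  then have "fps_nth (?S * G) (n - k - 1 + i) = fps_nth (fps_of_list ?\<rho> * G) (n - k - 1 + i)"
    using i km kn unfolding fps_cutoff_eq_fps_cutoff_iff by (simp add: mult.commute)
  ultimately show ?thesis by simp
qed

lemma numerators_eq_hankel_annihilators: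
  fixes U :: "'a::comm_ring_1 fps"
  assumes km: "k < m" and kn: "k < n"
  shows "{G \<in> fps_supported_on {..<n - k}. \<forall>j\<in>{n<..m + n - k}. fps_nth (U * G) j = 0} =
    hankel_annihilators (m - k - 1) (n - k - 1) (map (fps_nth U) [k + 2..<m + n - k + 1])"
proof -
  let ?\<rho> = "map (fps_nth U) [k + 2..<m + n - k + 1]"
  have supp: "fps_supported_on {..<n - k} = (fps_supported_on {..n - k - 1} :: 'a fps set)"
    using kn by (auto simp: fps_supported_on_def)
  have iff: "(\<forall>j\<in>{n<..m + n - k}. fps_nth (U * G) j = 0) \<longleftrightarrow>
      (\<forall>i\<le>m - k - 1. fps_nth (fps_of_list ?\<rho> * G) (n - k - 1 + i) = 0)"
    if G: "G \<in> fps_supported_on {..<n - k}" for G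
  proof
    assume H: "\<forall>j\<in>{n<..m + n - k}. fps_nth (U * G) j = 0"
    show "\<forall>i\<le>m - k - 1. fps_nth (fps_of_list ?\<rho> * G) (n - k - 1 + i) = 0"
    proof (intro allI impI)
      fix i assume i: "i \<le> m - k - 1"
      then have "n + 1 + i \<in> {n<..m + n - k}" using km by auto
      then show "fps_nth (fps_of_list ?\<rho> * G) (n - k - 1 + i) = 0"
        using H fps_nth_mult_eq_tail_coeffs[where U = U, OF km kn G i] by (simp del: upt_Suc)
    qed
  next
    assume H: "\<forall>i\<le>m - k - 1. fps_nth (fps_of_list ?\<rho> * G) (n - k - 1 + i) = 0"
    show "\<forall>j\<in>{n<..m + n - k}. fps_nth (U * G) j = 0"
    proof
      fix j assume "j \<in> {n<..m + n - k}"
      then have i: "j - n - 1 \<le> m - k - 1" and j: "j = n + 1 + (j - n - 1)" by auto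
      show "fps_nth (U * G) j = 0"
        using H fps_nth_mult_eq_tail_coeffs[where U = U, OF km kn G i] i
        by (subst j) (simp del: upt_Suc)
    qed
  qed
  show ?thesis
    unfolding hankel_annihilators_def supp[symmetric]
    by (rule Collect_cong, rule conj_cong[OF refl], rule iff) simp
qed

definition inverse_coeffs :: "'a::field list \<Rightarrow> nat \<Rightarrow> 'a list" where
  "inverse_coeffs x L = map (fps_nth (inverse (fps_of_list x))) [1..<L + 1]"

lemma card_hankel_annihilators_reduce:
  fixes a :: "'a::{field,finite}"
  assumes "a \<noteq> 0" and "k < m" and "k < n"
  shows "card (hankel_annihilators m n (replicate k 0 @ a # xs)) =
    card (hankel_annihilators (m - k - 1) (n - k - 1) (drop (k + 1) (inverse_coeffs (a # xs) (m + n - k))))"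
proof -
  have "drop (k + 1) (inverse_coeffs (a # xs) (m + n - k)) =
      map (fps_nth (inverse (fps_of_list (a # xs)))) [k + 2..<m + n - k + 1]"
    by (simp add: inverse_coeffs_def drop_map del: upt_Suc)
  then show ?thesis
    using card_hankel_annihilators_eq_numerators[of a k m n xs] assms
      numerators_eq_hankel_annihilators[of k m n "inverse (fps_of_list (a # xs))"]
    by simp
qed

lemma bij_betw_inverse_coeffs:
  fixes a :: "'a::{field,finite}"
  assumes a: "a \<noteq> 0"
  shows "bij_betw (\<lambda>xs. inverse_coeffs (a # xs) L) {xs. length xs = L} {u. length u = L}"
proof -
  have inj: "inj_on (\<lambda>xs. inverse_coeffs (a # xs) L) {xs. length xs = L}"
  proof (rule inj_onI)
    fix xs ys :: "'a list"
    assume xs: "xs \<in> {xs. length xs = L}" and ys: "ys \<in> {xs. length xs = L}"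
      and eq: "inverse_coeffs (a # xs) L = inverse_coeffs (a # ys) L"
    let ?X = "fps_of_list (a # xs)" and ?Y = "fps_of_list (a # ys)"
    have "fps_nth (inverse ?X) d = fps_nth (inverse ?Y) d" if "d < Suc L" for d
    proof (cases d)
      case (Suc j)
      then have "inverse_coeffs (a # xs) L ! j = inverse_coeffs (a # ys) L ! j" using eq by simp
      then show ?thesis using Suc that by (simp add: inverse_coeffs_def del: upt_Suc)
    qed (simp add: fps_nth_fps_of_list)
    then have "fps_cutoff (Suc L) (inverse ?X) = fps_cutoff (Suc L) (inverse ?Y)"
      by (simp add: fps_cutoff_eq_fps_cutoff_iff)
    then have "fps_cutoff (Suc L) (inverse (inverse ?X)) = fps_cutoff (Suc L) (inverse (inverse ?Y))"
      by (rule fps_cutoff_inverse_cong) (simp add: a fps_nth_fps_of_list)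
    moreover have "inverse (inverse ?X) = ?X" "inverse (inverse ?Y) = ?Y"
      using a by (simp_all add: fps_nth_fps_of_list)
    ultimately have "fps_nth ?X (Suc j) = fps_nth ?Y (Suc j)" if "j < L" for j
      using that unfolding fps_cutoff_eq_fps_cutoff_iff by simp
    then show "xs = ys"
      using xs ys by (intro nth_equalityI) (auto simp: fps_nth_fps_of_list)
  qed
  moreover have "(\<lambda>xs. inverse_coeffs (a # xs) L) ` {xs. length xs = L} = {u. length u = L}"
  proof (rule card_subset_eq[OF finite_lists_length])
    show "(\<lambda>xs. inverse_coeffs (a # xs) L) ` {xs. length xs = L} \<subseteq> {u. length u = L}"
      by (auto simp: inverse_coeffs_def simp del: upt_Suc)
    show "card ((\<lambda>xs. inverse_coeffs (a # xs) L) ` {xs. length xs = L}) = card {u :: 'a list. length u = L}"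
      using card_image[OF inj] by (simp add: card_lists_length)
  qed
  ultimately show ?thesis by (simp add: bij_betw_def)
qed

section \<open>Counting sequences\<close>

lemma card_lists_Suc_length:
  "card {x :: 'a::finite list. length x = Suc L \<and> P x} = (\<Sum>a\<in>UNIV. card {xs. length xs = L \<and> P (a # xs)})"
proof -
  have "{x. length x = Suc L \<and> P x} = (\<lambda>(a, xs). a # xs) ` (SIGMA a:UNIV. {xs. length xs = L \<and> P (a # xs)})"
    by (auto simp: length_Suc_conv)
  also have "card \<dots> = card (SIGMA a:UNIV. {xs. length xs = L \<and> P (a # xs)})"
    by (rule card_image) (auto simp: inj_on_def)
  also have "\<dots> = (\<Sum>a\<in>UNIV. card {xs. length xs = L \<and> P (a # xs)})"
    by (rule card_SigmaI) (auto intro: finite_subset[OF _ finite_lists_length])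
  finally show ?thesis .
qed

lemma card_lists_by_leading_zeros:
  fixes P :: "'a::{zero,finite} list \<Rightarrow> bool"
  assumes "\<And>k a. k < L \<Longrightarrow> a \<noteq> 0 \<Longrightarrow>
    card {xs. length xs = L - Suc k \<and> P (replicate k 0 @ a # xs)} = c k"
  shows "card {x. length x = L \<and> P x} = of_bool (P (replicate L 0)) + (\<Sum>k<L. (CARD('a) - 1) * c k)"
  using assms
proof (induction L arbitrary: P c)
  case 0
  have "{x :: 'a list. length x = 0 \<and> P x} = (if P [] then {[]} else {})" by auto
  then show ?case by simp
next
  case (Suc L)
  have "card {x. length x = Suc L \<and> P x} =
      card {xs. length xs = L \<and> P (0 # xs)} + (\<Sum>a\<in>UNIV - {0}. card {xs. length xs = L \<and> P (a # xs)})"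
    by (simp add: card_lists_Suc_length sum.remove[of UNIV 0])
  also have "(\<Sum>a\<in>UNIV - {0}. card {xs. length xs = L \<and> P (a # xs)}) = (CARD('a) - 1) * c 0"
    using Suc.prems[of 0] by (simp add: card_Diff_singleton)
  also have "card {xs. length xs = L \<and> P (0 # xs)} =
      of_bool (P (0 # replicate L 0)) + (\<Sum>k<L. (CARD('a) - 1) * c (Suc k))"
  proof (rule Suc.IH)
    fix k and a :: 'a assume "k < L" "a \<noteq> 0"
    then show "card {xs. length xs = L - Suc k \<and> P (0 # replicate k 0 @ a # xs)} = c (Suc k)"
      using Suc.prems[of "Suc k" a] by simp
  qed
  finally show ?case by (simp add: sum.lessThan_Suc_shift del: sum.lessThan_Suc)
qed

lemma card_lists_append_length:
  "card {x :: 'a::finite list. length x = k + L \<and> P (drop k x)} = CARD('a) ^ k * card {xs. length xs = L \<and> P xs}"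
proof -
  have "bij_betw (\<lambda>(u, xs). u @ xs) ({u. length u = k} \<times> {xs. length xs = L \<and> P xs})
      {x. length x = k + L \<and> P (drop k x)}"
    by (rule bij_betwI[where g = "\<lambda>x. (take k x, drop k x)"]) auto
  then show ?thesis
    by (simp add: bij_betw_same_card[symmetric] card_cartesian_product card_lists_length)
qed

lemma card_completions_short_prefix:
  fixes a :: "'a::{field,finite}"
  assumes a: "a \<noteq> 0" and "k < m" and "k < n"
  shows "card {xs. length xs = m + n - k \<and> B \<le> card (hankel_annihilators m n (replicate k 0 @ a # xs))} =
    CARD('a) ^ (k + 1) * card {\<rho> :: 'a list. length \<rho> = (m - k - 1) + (n - k - 1) + 1 \<and>
      B \<le> card (hankel_annihilators (m - k - 1) (n - k - 1) \<rho>)}"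
proof -
  let ?Q = "\<lambda>u :: 'a list. B \<le> card (hankel_annihilators (m - k - 1) (n - k - 1) (drop (k + 1) u))"
  have L: "m + n - k = (k + 1) + ((m - k - 1) + (n - k - 1) + 1)" using assms by simp
  have "card {xs. length xs = m + n - k \<and> B \<le> card (hankel_annihilators m n (replicate k 0 @ a # xs))} =
      card {xs \<in> {xs. length xs = m + n - k}. ?Q (inverse_coeffs (a # xs) (m + n - k))}"
    using card_hankel_annihilators_reduce[OF assms] by (intro arg_cong[where f = card]) auto
  also have "\<dots> = card {u \<in> {u. length u = m + n - k}. ?Q u}"
    by (rule bij_betw_same_card, rule bij_betw_Collect[OF bij_betw_inverse_coeffs[OF a]]) simp
  also have "\<dots> = card {u. length u = (k + 1) + ((m - k - 1) + (n - k - 1) + 1) \<and> ?Q u}"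
    by (simp only: L mem_Collect_eq)
  also have "\<dots> = CARD('a) ^ (k + 1) * card {\<rho> :: 'a list. length \<rho> = (m - k - 1) + (n - k - 1) + 1 \<and>
      B \<le> card (hankel_annihilators (m - k - 1) (n - k - 1) \<rho>)}"
    by (rule card_lists_append_length)
  finally show ?thesis .
qed

lemma card_completions_long_prefix:
  fixes a :: "'a::{field,finite}"
  assumes a: "a \<noteq> 0" and rm: "r \<le> m" and rn: "r \<le> n" and "r \<le> k" and "k \<le> m + n"
  shows "card {xs. length xs = m + n - k \<and>
      CARD('a) ^ (n + 1 - r) \<le> card (hankel_annihilators m n (replicate k 0 @ a # xs))}
    = (if m + n + 1 - r \<le> k then CARD('a) ^ (m + n - k) else 0)"
proof -
  let ?q = "CARD('a)"
  have q: "2 \<le> ?q" by (rule card_field_ge_2)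
  have iff: "?q ^ (n + 1 - r) \<le> card (hankel_annihilators m n (replicate k 0 @ a # xs)) \<longleftrightarrow>
      m + n + 1 - r \<le> k" for xs
  proof (cases "m < k")
    case True
    have "?q ^ (n + 1 - r) \<le> ?q ^ (max n k - m) \<longleftrightarrow> n + 1 - r \<le> max n k - m"
      using q by (intro power_increasing_iff) simp
    also have "\<dots> \<longleftrightarrow> m + n + 1 - r \<le> k" using assms True by (auto simp: max_def)
    finally show ?thesis using card_hankel_annihilators_many_zeros[OF a True assms(5)] by simp
  next
    case False
    have "card (hankel_annihilators m n (replicate k 0 @ a # xs)) < ?q ^ (n + 1 - r)"
    proof (cases "k \<le> n")
      case True
      have "card (hankel_annihilators m n (replicate k 0 @ a # xs)) \<le> ?q ^ (n - k)"
        using False True by (intro card_hankel_annihilators_few_zeros_le[OF a]) auto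
      also have "\<dots> < ?q ^ (n + 1 - r)" using q assms by (intro power_strict_increasing) auto
      finally show ?thesis .
    next
      case False
      have "card (hankel_annihilators m n (replicate k 0 @ a # xs)) \<le> 1"
        using False \<open>\<not> m < k\<close> by (intro card_hankel_annihilators_le_1[OF a]) auto
      also have "1 < ?q ^ (n + 1 - r)" using q rn by (intro one_less_power) auto
      finally show ?thesis .
    qed
    moreover have "\<not> m + n + 1 - r \<le> k" using False rn by auto
    ultimately show ?thesis by simp
  qed
  then have eq: "{xs. length xs = m + n - k \<and>
      ?q ^ (n + 1 - r) \<le> card (hankel_annihilators m n (replicate k 0 @ a # xs))} =
      {xs. length xs = m + n - k \<and> m + n + 1 - r \<le> k}"
    by blast
  show ?thesis unfolding eq by (cases "m + n + 1 - r \<le> k") (simp_all add: card_lists_length)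
qed

lemma nat_geometric_sum:
  fixes q :: nat
  assumes "1 \<le> q"
  shows "(q - 1) * (\<Sum>i<r. q ^ i) = q ^ r - 1"
proof -
  have "int ((q - 1) * (\<Sum>i<r. q ^ i)) = int (q ^ r - 1)"
    using assms power_diff_1_eq[of "int q" r] by (simp add: of_nat_diff)
  then show ?thesis by (simp only: of_nat_eq_iff)
qed

lemma sum_geometric_blocks:
  fixes q :: nat
  assumes q: "1 \<le> q" and rL: "2 * r \<le> L"
  shows "1 + (\<Sum>k<L. (q - 1) * (if k < r then q ^ (2 * r - Suc k) else if L - r \<le> k then q ^ (L - Suc k) else 0))
    = q ^ (2 * r)"
proof -
  define f where "f k = (q - 1) * (if k < r then q ^ (2 * r - Suc k) else if L - r \<le> k then q ^ (L - Suc k) else 0)"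
    for k
  have geom: "(q - 1) * (\<Sum>i<r. q ^ (r - Suc i)) = q ^ r - 1"
    using nat_geometric_sum[OF q, of r] sum.nat_diff_reindex[of "\<lambda>i. q ^ i" r] by simp
  have "(\<Sum>k<L. f k) = (\<Sum>k\<in>{0..<r}. f k) + (\<Sum>k\<in>{r..<L - r}. f k) + (\<Sum>k\<in>{L - r..<L}. f k)"
    using rL by (simp add: lessThan_atLeast0 sum.atLeastLessThan_concat)
  also have "(\<Sum>k\<in>{r..<L - r}. f k) = 0" by (auto simp: f_def intro: sum.neutral)
  also have "(\<Sum>k\<in>{0..<r}. f k) = q ^ r * (q ^ r - 1)"
  proof -
    have "(\<Sum>k\<in>{0..<r}. f k) = (\<Sum>k<r. q ^ r * ((q - 1) * q ^ (r - Suc k)))"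
      unfolding lessThan_atLeast0 f_def
      by (intro sum.cong refl) (auto simp: power_add[symmetric] intro!: arg_cong[where f = "(^) q"])
    then show ?thesis by (simp only: sum_distrib_left[symmetric] geom)
  qed
  also have "(\<Sum>k\<in>{L - r..<L}. f k) = q ^ r - 1"
  proof -
    have "(\<Sum>k\<in>{L - r..<L}. f k) = (\<Sum>i\<in>{0..<r}. f (i + (L - r)))"
      using rL sum.shift_bounds_nat_ivl[of f 0 "L - r" r] by simp
    also have "\<dots> = (\<Sum>i<r. (q - 1) * q ^ (r - Suc i))"
      unfolding lessThan_atLeast0 f_def using rL by (intro sum.cong refl) auto
    also have "\<dots> = q ^ r - 1" by (simp only: sum_distrib_left[symmetric] geom)
    finally show ?thesis .
  qed
  finally have "(\<Sum>k<L. f k) = q ^ r * (q ^ r - 1) + (q ^ r - 1)" by simp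
  moreover have "1 + (s * (s - 1) + (s - 1)) = s * s" if "1 \<le> s" for s :: nat
    using that by (cases s) auto
  ultimately show ?thesis
    unfolding f_def[symmetric] using q by (simp add: mult_2 power_add)
qed

lemma card_large_hankel_annihilators:
  assumes "r \<le> m" and "r \<le> n"
  shows "card {x :: 'a::{field,finite} list. length x = m + n + 1 \<and>
      CARD('a) ^ (n + 1 - r) \<le> card (hankel_annihilators m n x)} = CARD('a) ^ (2 * r)"
  using assms
proof (induction r arbitrary: m n rule: less_induct)
  case (less r m n)
  let ?q = "CARD('a)"
  let ?P = "\<lambda>x :: 'a list. ?q ^ (n + 1 - r) \<le> card (hankel_annihilators m n x)"
  define c where "c k = (if k < r then ?q ^ (2 * r - Suc k)
    else if m + n + 1 - r \<le> k then ?q ^ (m + n + 1 - Suc k) else 0)" for k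
  have completions: "card {xs. length xs = m + n + 1 - Suc k \<and> ?P (replicate k 0 @ a # xs)} = c k"
    if "k < m + n + 1" and a: "a \<noteq> 0" for k and a :: 'a
  proof (cases "k < r")
    case True
    let ?r' = "r - k - 1" and ?m' = "m - k - 1" and ?n' = "n - k - 1"
    have "n + 1 - r = ?n' + 1 - ?r'" using True less.prems by auto
    then have "card {xs. length xs = m + n + 1 - Suc k \<and> ?P (replicate k 0 @ a # xs)} =
        ?q ^ (k + 1) * card {\<rho> :: 'a list. length \<rho> = ?m' + ?n' + 1 \<and>
          ?q ^ (?n' + 1 - ?r') \<le> card (hankel_annihilators ?m' ?n' \<rho>)}"
      using card_completions_short_prefix[OF a, of k m n] True less.prems by simp
    also have "\<dots> = ?q ^ (k + 1) * ?q ^ (2 * ?r')"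
      using less.IH[of ?r' ?m' ?n'] True less.prems by simp
    also have "\<dots> = c k"
    proof -
      have "2 * r - Suc k = (k + 1) + 2 * ?r'" using True by simp
      then show ?thesis using True by (simp only: c_def if_True power_add)
    qed
    finally show ?thesis .
  next
    case False
    then show ?thesis using card_completions_long_prefix[OF a less.prems, of k] that by (simp add: c_def)
  qed
  have "?q ^ (n + 1 - r) \<le> ?q ^ Suc n"
    using card_field_ge_2[where 'a = 'a] by (intro power_increasing) auto
  then have "?P (replicate (m + n + 1) 0)" by (simp only: card_hankel_annihilators_zero)
  then have "card {x. length x = m + n + 1 \<and> ?P x} = 1 + (\<Sum>k<m + n + 1. (?q - 1) * c k)"
    using card_lists_by_leading_zeros[of "m + n + 1" ?P c] completions by simp
  also have "\<dots> = ?q ^ (2 * r)"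
    unfolding c_def using less.prems card_field_ge_2[where 'a = 'a] by (intro sum_geometric_blocks) auto
  finally show ?case .
qed

section \<open>The kernel of the Hankel matrix\<close>

lemma bij_betw_reversed_coeffs:
  "bij_betw (\<lambda>P. vec (n + 1) (\<lambda>l. fps_nth P (n - l))) (fps_supported_on {..n}) (carrier_vec (n + 1))"
proof (rule bij_betwI[where g = "\<lambda>v. Abs_fps (\<lambda>d. if d \<le> n then v $ (n - d) else 0)"])
  show "Abs_fps (\<lambda>d. if d \<le> n then vec (n + 1) (\<lambda>l. fps_nth P (n - l)) $ (n - d) else 0) = P"
    if "P \<in> fps_supported_on {..n}" for P :: "'a fps"
    using that by (intro fps_ext) auto
  show "vec (n + 1) (\<lambda>l. fps_nth (Abs_fps (\<lambda>d. if d \<le> n then v $ (n - d) else 0)) (n - l)) = v"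
    if "v \<in> carrier_vec (n + 1)" for v :: "'a vec"
    using that by (intro eq_vecI) auto
qed auto

lemma hankel_mult_reversed_coeffs:
  fixes x :: "'a::comm_ring_1 list"
  assumes x: "length x = m + n + 1" and P: "P \<in> fps_supported_on {..n}" and i: "i \<le> m"
  shows "(hankel m n x *\<^sub>v vec (n + 1) (\<lambda>l. fps_nth P (n - l))) $ i =
    fps_nth (fps_of_list x * P) (n + i)"
proof -
  have "(hankel m n x *\<^sub>v vec (n + 1) (\<lambda>l. fps_nth P (n - l))) $ i =
      (\<Sum>l=0..n. x ! (i + l) * fps_nth P (n - l))"
    using i by (simp add: hankel_def scalar_prod_def atLeastLessThanSuc_atLeastAtMost)
  also have "\<dots> = (\<Sum>d=0..n. fps_nth P d * fps_nth (fps_of_list x) (n + i - d))"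
    using x i by (subst sum.atLeastAtMost_rev) (auto simp: fps_nth_fps_of_list intro!: sum.cong)
  also have "\<dots> = (\<Sum>d=0..n + i. fps_nth P d * fps_nth (fps_of_list x) (n + i - d))"
    using P by (intro sum.mono_neutral_left) auto
  also have "\<dots> = fps_nth (fps_of_list x * P) (n + i)"
    by (simp add: fps_mult_nth mult.commute[of "fps_of_list x"])
  finally show ?thesis .
qed

lemma card_mat_kernel_hankel:
  fixes x :: "'a::{field,finite} list"
  assumes x: "length x = m + n + 1"
  shows "card (mat_kernel (hankel m n x)) = card (hankel_annihilators m n x)"
proof -
  have "bij_betw (\<lambda>P. vec (n + 1) (\<lambda>l. fps_nth P (n - l))) (hankel_annihilators m n x)
      {v \<in> carrier_vec (n + 1). hankel m n x *\<^sub>v v = 0\<^sub>v (m + 1)}"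
    unfolding hankel_annihilators_def
  proof (rule bij_betw_Collect[OF bij_betw_reversed_coeffs])
    fix P :: "'a fps" assume P: "P \<in> fps_supported_on {..n}"
    show "hankel m n x *\<^sub>v vec (n + 1) (\<lambda>l. fps_nth P (n - l)) = 0\<^sub>v (m + 1) \<longleftrightarrow>
        (\<forall>i\<le>m. fps_nth (fps_of_list x * P) (n + i) = 0)"
    proof -
      have "dim_row (hankel m n x) = m + 1" by (simp add: hankel_def)
      then show ?thesis
        using hankel_mult_reversed_coeffs[OF x P]
        by (auto simp: vec_eq_iff less_Suc_eq_le simp del: index_mult_mat_vec)
    qed
  qed
  moreover have "mat_kernel (hankel m n x) = {v \<in> carrier_vec (n + 1). hankel m n x *\<^sub>v v = 0\<^sub>v (m + 1)}"
    by (simp add: mat_kernel_def hankel_def)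
  ultimately show ?thesis by (simp add: bij_betw_same_card)
qed

lemma mat_rank_hankel_le_iff:
  fixes x :: "'a::{field,finite} list"
  assumes x: "length x = m + n + 1" and rn: "r \<le> n"
  shows "mat_rank (hankel m n x) \<le> r \<longleftrightarrow> CARD('a) ^ (n + 1 - r) \<le> card (hankel_annihilators m n x)"
proof -
  have H: "hankel m n x \<in> carrier_mat (m + 1) (n + 1)" by (simp add: hankel_def)
  have rank: "mat_rank (hankel m n x) \<le> n + 1"
    using vec_space.rank_le_nc[OF H] by (simp add: mat_rank_def hankel_def)
  have "mat_rank (hankel m n x) \<le> r \<longleftrightarrow> n + 1 - r \<le> n + 1 - mat_rank (hankel m n x)"
    using rank rn by auto
  also have "\<dots> \<longleftrightarrow> CARD('a) ^ (n + 1 - r) \<le> CARD('a) ^ (n + 1 - mat_rank (hankel m n x))"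
    using card_field_ge_2[where 'a = 'a] by (intro power_increasing_iff[symmetric]) simp
  also have "CARD('a) ^ (n + 1 - mat_rank (hankel m n x)) = card (hankel_annihilators m n x)"
    using card_mat_kernel[OF H] card_mat_kernel_hankel[OF x] by simp
  finally show ?thesis .
qed

theorem theorem1:
  fixes r m n :: nat
  assumes "r \<le> m" and "r \<le> n"
  shows "card {x :: 'a::{field,finite} list. length x = m + n + 1 \<and> mat_rank (hankel m n x) \<le> r}
           = card (UNIV :: 'a set) ^ (2 * r)"
proof -
  have "{x :: 'a list. length x = m + n + 1 \<and> mat_rank (hankel m n x) \<le> r} =
      {x. length x = m + n + 1 \<and> CARD('a) ^ (n + 1 - r) \<le> card (hankel_annihilators m n x)}"
    using mat_rank_hankel_le_iff[OF _ assms(2)] by blast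
  then show ?thesis using card_large_hankel_annihilators[OF assms] by simp
qed

end
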